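(* Let $\mathfrak{g}$ be a filiform Lie algebra of odd dimension $n\ge3$ over a field $K$ of characteristic zero, and fix an adapted basis $\{e_1,\dots,e_n\}$, with $\mathfrak{g}_i=\langle e_i,\dots,e_n\rangle$. Then $\chi(\mathfrak{g})=1$ if and only if $[\mathfrak{g}_i,\mathfrak{g}_{n-i}]\neq0$ for all $i=1,\dots,n-1$.
   Context: A filiform Lie algebra of dimension $n$ is a nilpotent Lie algebra with $\dim\mathfrak{g}^k=n-k$ for $2\le k\le n$ (lower central series $\mathfrak{g}^1=\mathfrak{g}$, $\mathfrak{g}^{k+1}=[\mathfrak{g},\mathfrak{g}^k]$). An adapted basis is a basis $\{e_1,\dots,e_n\}$ with $[e_1,e_i]=e_{i+1}$ ($2\le i\le n-1$), $[e_1,e_n]=0$, $[e_2,e_3]\in\langle e_5,\dots,e_n\rangle$; such a basis exists, and (Vergne) it then satisfies $[e_i,e_j]\in\langle e_{i+j},\dots,e_n\rangle$ if $i+j\le n$, $[e_i,e_j]=0$ if $i+j>n+1$, and $[e_i,e_{n+1-i}]=(-1)^i\alpha e_n$ for some $\alpha\in K$ with $\alpha=0$ when $n$ is odd. For $\ell\in\mathfrak{g}^*$, $\mathfrak{g}(\ell)=\{y\in\mathfrak{g}\mid\ell([x,y])=0\ \forall x\in\mathfrak{g}\}$ and $\chi(\mathfrak{g})=\min_{\ell\in\mathfrak{g}^*}\dim\mathfrak{g}(\ell)$. *)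

theory Defs
  imports Complex_Main
begin

definition lie_algebra :: "('k::field \<Rightarrow> 'g::ab_group_add \<Rightarrow> 'g) \<Rightarrow> ('g \<Rightarrow> 'g \<Rightarrow> 'g) \<Rightarrow> bool" where
  "lie_algebra s br \<longleftrightarrow> vector_space s \<and>
     (\<forall>x y z. br (x + y) z = br x z + br y z) \<and>
     (\<forall>x y z. br x (y + z) = br x y + br x z) \<and>
     (\<forall>c x y. br (s c x) y = s c (br x y)) \<and>
     (\<forall>c x y. br x (s c y) = s c (br x y)) \<and>
     (\<forall>x. br x x = 0) \<and>
     (\<forall>x y z. br x (br y z) + br y (br z x) + br z (br x y) = 0)"

definition bracket_space :: "('k::field \<Rightarrow> 'g::ab_group_add \<Rightarrow> 'g) \<Rightarrow> ('g \<Rightarrow> 'g \<Rightarrow> 'g) \<Rightarrow> 'g set \<Rightarrow> 'g set \<Rightarrow> 'g set" where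
  "bracket_space s br A B = module.span s {br a b | a b. a \<in> A \<and> b \<in> B}"

text \<open>Lower central series: g^1 = g, g^(k+1) = [g, g^k] (g^0 is also set to g).\<close>
fun lcs :: "('k::field \<Rightarrow> 'g::ab_group_add \<Rightarrow> 'g) \<Rightarrow> ('g \<Rightarrow> 'g \<Rightarrow> 'g) \<Rightarrow> nat \<Rightarrow> 'g set" where
  "lcs s br 0 = UNIV"
| "lcs s br (Suc 0) = UNIV"
| "lcs s br (Suc (Suc k)) = bracket_space s br UNIV (lcs s br (Suc k))"

definition finite_dim :: "('k::field \<Rightarrow> 'g::ab_group_add \<Rightarrow> 'g) \<Rightarrow> bool" where
  "finite_dim s \<longleftrightarrow> (\<exists>B. finite B \<and> module.span s B = UNIV)"

definition nilpotent_lie :: "('k::field \<Rightarrow> 'g::ab_group_add \<Rightarrow> 'g) \<Rightarrow> ('g \<Rightarrow> 'g \<Rightarrow> 'g) \<Rightarrow> bool" where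
  "nilpotent_lie s br \<longleftrightarrow> (\<exists>k\<ge>1. lcs s br k = {0})"

definition filiform :: "('k::field \<Rightarrow> 'g::ab_group_add \<Rightarrow> 'g) \<Rightarrow> ('g \<Rightarrow> 'g \<Rightarrow> 'g) \<Rightarrow> nat \<Rightarrow> bool" where
  "filiform s br n \<longleftrightarrow> lie_algebra s br \<and> finite_dim s \<and> vector_space.dim s (UNIV :: 'g set) = n \<and>
     nilpotent_lie s br \<and>
     (\<forall>k. 2 \<le> k \<and> k \<le> n \<longrightarrow> vector_space.dim s (lcs s br k) = n - k)"

definition adapted_basis :: "('k::field \<Rightarrow> 'g::ab_group_add \<Rightarrow> 'g) \<Rightarrow> ('g \<Rightarrow> 'g \<Rightarrow> 'g) \<Rightarrow> nat \<Rightarrow> (nat \<Rightarrow> 'g) \<Rightarrow> bool" where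
  "adapted_basis s br n e \<longleftrightarrow>
     inj_on e {1..n} \<and> \<not> module.dependent s (e ` {1..n}) \<and> module.span s (e ` {1..n}) = UNIV \<and>
     (\<forall>i. 2 \<le> i \<and> i \<le> n - 1 \<longrightarrow> br (e 1) (e i) = e (i + 1)) \<and>
     br (e 1) (e n) = 0 \<and>
     br (e 2) (e 3) \<in> module.span s (e ` {5..n})"

definition basis_tail :: "('k::field \<Rightarrow> 'g::ab_group_add \<Rightarrow> 'g) \<Rightarrow> nat \<Rightarrow> (nat \<Rightarrow> 'g) \<Rightarrow> nat \<Rightarrow> 'g set" where
  "basis_tail s n e i = module.span s (e ` {i..n})"

definition stabilizer :: "('g \<Rightarrow> 'g \<Rightarrow> 'g) \<Rightarrow> ('g \<Rightarrow> 'k::zero) \<Rightarrow> 'g set" where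
  "stabilizer br l = {y. \<forall>x. l (br x y) = 0}"

definition chi :: "('k::field \<Rightarrow> 'g::ab_group_add \<Rightarrow> 'g) \<Rightarrow> ('g \<Rightarrow> 'g \<Rightarrow> 'g) \<Rightarrow> nat" where
  "chi s br = (LEAST d. \<exists>l. Vector_Spaces.linear s ((*) :: 'k \<Rightarrow> 'k \<Rightarrow> 'k) l \<and>
                              vector_space.dim s (stabilizer br l) = d)"

end

theory Submission
  imports Defs
begin

(* For odd n the adapted basis is graded in Vergne's sense: [e_i, e_j] lies in g_(i+j) for all
   i, j. This is proved by induction on i + j: the Jacobi identity with e_1 links the brackets
   [e_a, e_(S-a)] of a fixed total degree S, which settles even S starting from [e_m, e_m] = 0;
   for odd S = 2m+1 these brackets are +-t e_(S-1) modulo g_S, the same argument one degree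
   higher gives [e_2, e_(S-1)] = (m-1) t e_S modulo g_(S+1), and then the Jacobi identity for
   e_2, e_3, e_(S-3) yields (m-1) t^2 = 0, so t = 0 in characteristic zero. The degree n+1 is
   even precisely because n is odd.
   By the grading, [g_i, g_(n-i)] is spanned by [e_i, e_(n-i)], a multiple of the central vector
   e_n. If all these multiples are nonzero, the functional l = e_n^* has stabilizer <e_n>: the
   coordinates of a stabilized vector vanish one at a time. Since e_n is central, every
   stabilizer contains it, hence chi = 1. If instead [g_i, g_(n-i)] = 0, then for any l the i-1
   conditions l([e_a, u]) = 0 (a < i) cut the (i+1)-dimensional g_(n-i) down to a subspace of
   dimension at least 2 inside g(l). *)

context vector_space
begin

lemma linear_functional_zero: "Vector_Spaces.linear scale (*) f \<Longrightarrow> f 0 = 0"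
  using module_hom.zero[of scale "(*)" f] by (simp add: module_hom_iff_linear)

lemma subspace_linear_functional_kernel:
  "Vector_Spaces.linear scale (*) f \<Longrightarrow> subspace {x. f x = 0}"
  using module_hom.subspace_kernel[of scale "(*)" f] by (simp add: module_hom_iff_linear)

end

context finite_dimensional_vector_space
begin

lemma dim_le_dim_kernel_Suc:
  assumes U: "subspace U" and f: "Vector_Spaces.linear scale (*) f"
  shows "dim U \<le> Suc (dim {u \<in> U. f u = 0})"
proof (cases "\<forall>u\<in>U. f u = 0")
  case True
  then have "{u \<in> U. f u = 0} = U" by blast
  then show ?thesis by simp
next
  case False
  then obtain u0 where u0: "u0 \<in> U" "f u0 \<noteq> 0" by blast
  define K where "K = {u \<in> U. f u = 0}"
  interpret f: Vector_Spaces.linear scale "(*)" f by (rule f)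
  have "U \<subseteq> span (insert u0 K)"
  proof
    fix u assume u: "u \<in> U"
    have "u - scale (f u / f u0) u0 \<in> K"
      using u u0 U by (simp add: K_def f.diff f.scale subspace_diff subspace_scale)
    then show "u \<in> span (insert u0 K)"
      unfolding span_breakdown_eq by (blast intro: span_base)
  qed
  then have "dim U \<le> dim (insert u0 K)" by (rule dim_mono)
  also have "\<dots> \<le> Suc (dim K)" unfolding dim_insert by simp
  finally show ?thesis unfolding K_def .
qed

lemma dim_le_dim_common_kernel_add:
  assumes U: "subspace U" and f: "\<And>a. Vector_Spaces.linear scale (*) (f a)"
  shows "dim U \<le> dim {u \<in> U. \<forall>a<r. f a u = 0} + r"
proof (induction r)
  case 0 then show ?case by simp
next
  case (Suc r)
  let ?K = "{u \<in> U. \<forall>a<r. f a u = 0}"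
  have hom: "module_hom scale (*) (f a)" for a
    using f by (simp add: module_hom_iff_linear)
  have "subspace ?K"
    using U module_hom.zero[OF hom] module_hom.add[OF hom] module_hom.scale[OF hom]
    unfolding subspace_def by auto
  then have "dim ?K \<le> Suc (dim {u \<in> ?K. f r u = 0})"
    by (rule dim_le_dim_kernel_Suc) (rule f)
  also have "{u \<in> ?K. f r u = 0} = {u \<in> U. \<forall>a<Suc r. f a u = 0}"
    by (auto simp: less_Suc_eq)
  finally show ?case using Suc.IH by simp
qed

end

locale lie_alg = vector_space s
  for s :: "'k::field \<Rightarrow> 'g::ab_group_add \<Rightarrow> 'g" +
  fixes br :: "'g \<Rightarrow> 'g \<Rightarrow> 'g"
  assumes lie_algebra: "lie_algebra s br"
begin

lemma bracket_add_left: "br (x + y) z = br x z + br y z"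
  and bracket_add_right: "br x (y + z) = br x y + br x z"
  and bracket_scale_left: "br (s c x) y = s c (br x y)"
  and bracket_scale_right: "br x (s c y) = s c (br x y)"
  and bracket_self [simp]: "br x x = 0"
  and jacobi: "br x (br y z) + br y (br z x) + br z (br x y) = 0"
  using lie_algebra unfolding lie_algebra_def by blast+

lemma linear_bracket_right: "Vector_Spaces.linear s s (br x)"
  by (simp add: Vector_Spaces.linear_iff vector_space_axioms bracket_add_right bracket_scale_right)

lemma bracket_zero_left [simp]: "br 0 y = 0"
  using bracket_add_left[of 0 0 y] by simp

lemma bracket_zero_right [simp]: "br x 0 = 0"
  using bracket_add_right[of x 0 0] by simp

lemma bracket_minus_left: "br (- x) y = - br x y"
  using bracket_add_left[of x "- x" y] by (simp add: eq_neg_iff_add_eq_0 add.commute)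

lemma bracket_minus_right: "br x (- y) = - br x y"
  using bracket_add_right[of x y "- y"] by (simp add: eq_neg_iff_add_eq_0 add.commute)

lemma bracket_diff_left: "br (x - x') y = br x y - br x' y"
  using bracket_add_left[of x "- x'" y] by (simp add: bracket_minus_left)

lemma bracket_diff_right: "br x (y - y') = br x y - br x y'"
  using bracket_add_right[of x y "- y'"] by (simp add: bracket_minus_right)

lemma bracket_antisym: "br x y = - br y x"
proof -
  have "br (x + y) (x + y) = br x x + br y x + (br x y + br y y)"
    by (simp only: bracket_add_left bracket_add_right)
  then have "br x y + br y x = 0" by (simp add: add.commute)
  then show ?thesis by (simp add: eq_neg_iff_add_eq_0 add.commute)
qed

lemma bracket_span_right:
  assumes "y \<in> span A" "subspace T" "\<And>a. a \<in> A \<Longrightarrow> br x a \<in> T"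
  shows "br x y \<in> T"
  using assms(1)
proof (induction rule: span_induct)
  case base
  show ?case using assms(2) unfolding subspace_def by (simp add: bracket_add_right bracket_scale_right)
qed (use assms(3) in auto)

lemma bracket_span_left:
  assumes "x \<in> span A" "subspace T" "\<And>a. a \<in> A \<Longrightarrow> br a y \<in> T"
  shows "br x y \<in> T"
  using assms(1)
proof (induction rule: span_induct)
  case base
  show ?case using assms(2) unfolding subspace_def by (simp add: bracket_add_left bracket_scale_left)
qed (use assms(3) in auto)

lemma lcs_subspace: "2 \<le> k \<Longrightarrow> subspace (lcs s br k)"
  by (cases k; cases "k - 1") (simp_all add: bracket_space_def)

lemma bracket_in_lcs_Suc: "1 \<le> k \<Longrightarrow> y \<in> lcs s br k \<Longrightarrow> br x y \<in> lcs s br (Suc k)"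
  by (cases k) (auto simp: bracket_space_def intro: span_base)

end

locale adapted_filiform =
  fixes s :: "'k::field_char_0 \<Rightarrow> 'g::ab_group_add \<Rightarrow> 'g"
    and br :: "'g \<Rightarrow> 'g \<Rightarrow> 'g"
    and n :: nat and e :: "nat \<Rightarrow> 'g"
  assumes filiform: "filiform s br n"
    and n_ge_3: "3 \<le> n"
    and adapted: "adapted_basis s br n e"
begin

lemma basis_inj: "inj_on e {1..n}"
  and basis_independent: "\<not> module.dependent s (e ` {1..n})"
  and basis_spans: "module.span s (e ` {1..n}) = UNIV"
  and bracket_e1_basis: "2 \<le> i \<Longrightarrow> i \<le> n - 1 \<Longrightarrow> br (e 1) (e i) = e (i + 1)"
  and bracket_e1_en: "br (e 1) (e n) = 0"
  and bracket_e2_e3_in_span: "br (e 2) (e 3) \<in> module.span s (e ` {5..n})"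
  using adapted unfolding adapted_basis_def by blast+

sublocale lie_alg s br
proof -
  have "lie_algebra s br" using filiform by (simp add: filiform_def)
  then show "lie_alg s br" by (simp add: lie_alg_def lie_alg_axioms_def lie_algebra_def)
qed

sublocale finite_dimensional_vector_space s "e ` {1..n}"
  using basis_independent basis_spans
  by (simp add: finite_dimensional_vector_space_def finite_dimensional_vector_space_axioms_def
      vector_space_axioms)

abbreviation tail :: "nat \<Rightarrow> 'g set" where
  "tail i \<equiv> basis_tail s n e i"

lemma subspace_tail [simp]: "subspace (tail m)"
  and zero_in_tail [simp]: "0 \<in> tail m"
  by (simp_all add: basis_tail_def span_zero)

lemma tail_add: "x \<in> tail m \<Longrightarrow> y \<in> tail m \<Longrightarrow> x + y \<in> tail m"
  and tail_diff: "x \<in> tail m \<Longrightarrow> y \<in> tail m \<Longrightarrow> x - y \<in> tail m"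
  and tail_scale: "x \<in> tail m \<Longrightarrow> s c x \<in> tail m"
  by (simp_all add: basis_tail_def span_add span_diff span_scale)

lemma minus_in_tail_iff: "- x \<in> tail m \<longleftrightarrow> x \<in> tail m"
  unfolding basis_tail_def using span_neg[of x] span_neg[of "- x"] by auto

lemma tail_add_iff: "x + y \<in> tail m \<Longrightarrow> x \<in> tail m \<longleftrightarrow> y \<in> tail m"
  using tail_diff[of "x + y" m x] tail_diff[of "x + y" m y] by auto

lemma tail_1: "tail 1 = UNIV"
  unfolding basis_tail_def by (rule basis_spans)

lemma tail_eq_zero_above: "n < m \<Longrightarrow> tail m = {0}"
  by (simp add: basis_tail_def)

lemma basis_in_tail: "m \<le> k \<Longrightarrow> k \<le> n \<Longrightarrow> e k \<in> tail m"
  by (simp add: basis_tail_def span_base)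

lemma tail_antimono:
  assumes "m \<le> m'" "x \<in> tail m'"
  shows "x \<in> tail m"
proof -
  have "e ` {m'..n} \<subseteq> e ` {m..n}" using assms(1) by (auto intro: image_mono)
  then show "x \<in> tail m" using assms(2) unfolding basis_tail_def by (meson span_mono subsetD)
qed

lemma tail_decompose:
  assumes "m \<le> n" "x \<in> tail m"
  shows "\<exists>c. x - s c (e m) \<in> tail (Suc m)"
proof -
  have "{m..n} = insert m {Suc m..n}" using assms(1) by auto
  then have "e ` {m..n} = insert (e m) (e ` {Suc m..n})" by simp
  then show ?thesis using assms(2) by (simp add: basis_tail_def span_breakdown_eq)
qed

lemma basis_notin_tail_Suc:
  assumes "1 \<le> m" "m \<le> n"
  shows "e m \<notin> tail (Suc m)"
proof
  assume "e m \<in> tail (Suc m)"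
  moreover have "tail (Suc m) \<subseteq> span (e ` {1..n} - {e m})"
    unfolding basis_tail_def
  proof (rule span_mono, rule subsetI)
    fix x assume "x \<in> e ` {Suc m..n}"
    then obtain k where k: "k \<in> {Suc m..n}" "x = e k" by (rule imageE)
    have "k \<in> {1..n}" "m \<in> {1..n}" "k \<noteq> m" using k assms by auto
    then have "e k \<noteq> e m" using basis_inj unfolding inj_on_def by blast
    then show "x \<in> e ` {1..n} - {e m}" using k \<open>k \<in> {1..n}\<close> by simp
  qed
  ultimately have "e m \<in> span (e ` {1..n} - {e m})" by (rule subsetD[rotated])
  moreover have "e m \<in> e ` {1..n}" using assms by simp
  ultimately have "dependent (e ` {1..n})" unfolding dependent_def by (rule bexI)
  then show False using basis_independent by contradiction
qed

lemma scale_basis_in_tail_SucD: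
  assumes "1 \<le> m" "m \<le> n" "s c (e m) \<in> tail (Suc m)"
  shows "c = 0"
proof (rule ccontr)
  assume "c \<noteq> 0"
  then have "s (inverse c) (s c (e m)) = e m" by simp
  with tail_scale[OF assms(3), of "inverse c"] basis_notin_tail_Suc[OF assms(1,2)] show False
    by simp
qed

lemma basis_nonzero: "1 \<le> k \<Longrightarrow> k \<le> n \<Longrightarrow> e k \<noteq> 0"
  using basis_notin_tail_Suc[of k] by auto

lemma dim_tail:
  assumes "1 \<le> m" "m \<le> Suc n"
  shows "dim (tail m) = Suc n - m"
proof -
  have "e ` {m..n} \<subseteq> e ` {1..n}" using assms(1) by (intro image_mono) auto
  then have ind: "independent (e ` {m..n})" by (rule independent_mono[OF basis_independent])
  have "inj_on e {m..n}"
    by (rule inj_on_subset[OF basis_inj]) (use assms in auto)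
  then show ?thesis
    unfolding basis_tail_def dim_span_eq_card_independent[OF ind] by (simp add: card_image)
qed

lemma bracket_e2_e3: "br (e 2) (e 3) \<in> tail 5"
  using bracket_e2_e3_in_span by (simp add: basis_tail_def)

lemma bracket_e1_tail:
  assumes "1 \<le> m" "x \<in> tail m"
  shows "br (e 1) x \<in> tail (Suc m)"
  using assms(2) unfolding basis_tail_def[of s n e m]
proof (rule bracket_span_right)
  fix a assume "a \<in> e ` {m..n}"
  then obtain k where k: "m \<le> k" "k \<le> n" "a = e k" by auto
  consider "k = 1" | "2 \<le> k" "k \<le> n - 1" | "k = n" using k assms(1) by linarith
  then show "br (e 1) a \<in> tail (Suc m)"
  proof cases
    case 2
    then have "br (e 1) a = e (k + 1)" using k bracket_e1_basis by simp
    moreover have "e (k + 1) \<in> tail (Suc m)" using 2 k by (intro basis_in_tail) linarith+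
    ultimately show ?thesis by simp
  qed (use k bracket_e1_en in simp_all)
qed simp

lemma basis_in_lcs: "1 \<le> k \<Longrightarrow> k < j \<Longrightarrow> j \<le> n \<Longrightarrow> e j \<in> lcs s br k"
proof (induction k arbitrary: j rule: nat_induct_at_least)
  case base then show ?case by simp
next
  case (Suc k)
  have "e j = br (e 1) (e (j - 1))" using Suc.prems Suc.hyps bracket_e1_basis[of "j - 1"] by simp
  moreover have "e (j - 1) \<in> lcs s br k" using Suc by simp
  ultimately show ?case using bracket_in_lcs_Suc Suc.hyps by simp
qed

lemma lcs_eq_tail:
  assumes "2 \<le> k" "k \<le> n"
  shows "lcs s br k = tail (Suc k)"
proof -
  have sub: "tail (Suc k) \<subseteq> lcs s br k"
    unfolding basis_tail_def
    by (rule span_minimal[OF _ lcs_subspace[OF assms(1)]]) (use assms basis_in_lcs in auto)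
  moreover have "dim (lcs s br k) = dim (tail (Suc k))"
    using filiform assms by (simp add: filiform_def dim_tail)
  ultimately show ?thesis
    using subspace_dim_equal[OF subspace_tail lcs_subspace[OF assms(1)] sub] by simp
qed

lemma bracket_tail_ge_2:
  assumes "2 \<le> m" "y \<in> tail m"
  shows "br x y \<in> tail (Suc m)"
proof (cases "m \<le> n")
  case False then show ?thesis using assms tail_eq_zero_above by simp
next
  case True
  have "y \<in> lcs s br (m - 1)"
    using assms lcs_eq_tail[of "m - 1"] True by (cases "m = 2") simp_all
  then have "br x y \<in> lcs s br m" using bracket_in_lcs_Suc[of "m - 1"] assms by simp
  then show ?thesis using lcs_eq_tail[of m] assms True by simp
qed

lemma bracket_basis_Suc:
  assumes "2 \<le> i" "i \<le> n - 1"
  shows "br (e (i + 1)) z = br (e 1) (br (e i) z) - br (e i) (br (e 1) z)"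
proof -
  have "br (e 1) (br (e i) z) + br (e i) (br z (e 1)) + br z (e (i + 1)) = 0"
    using jacobi[of "e 1" "e i" z] bracket_e1_basis[OF assms] by simp
  then show ?thesis
    by (simp add: bracket_antisym[of z] bracket_minus_right algebra_simps)
qed

lemma bracket_basis_leibniz:
  assumes "2 \<le> a" "a \<le> n - 1" "2 \<le> b" "b \<le> n - 1"
  shows "br (e (a + 1)) (e b) + br (e a) (e (b + 1)) = br (e 1) (br (e a) (e b))"
  using bracket_basis_Suc[OF assms(1,2), of "e b"] bracket_e1_basis[OF assms(3,4)] by simp

lemma bracket_basis_tail:
  assumes "2 \<le> i" "i \<le> n" "1 \<le> m" "y \<in> tail m"
  shows "br (e i) y \<in> tail (i + m - 1)"
  using assms
proof (induction i arbitrary: m y rule: nat_induct_at_least)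
  case base
  show ?case using base.prems(3) unfolding basis_tail_def[of s n e m]
  proof (rule bracket_span_right)
    fix a assume "a \<in> e ` {m..n}"
    then obtain k where k: "m \<le> k" "k \<le> n" "a = e k" by auto
    show "br (e 2) a \<in> tail (2 + m - 1)"
    proof (cases "k = 1")
      case True
      then have "br (e 2) a = - e 3"
        using k bracket_antisym[of "e 2" "e 1"] bracket_e1_basis[of 2] n_ge_3 by simp
      then show ?thesis using True k n_ge_3 by (simp add: minus_in_tail_iff basis_in_tail)
    next
      case False
      then have "br (e 2) a \<in> tail (Suc k)"
        using k base.prems(2) by (intro bracket_tail_ge_2) (simp_all add: basis_in_tail)
      then show ?thesis using k by (auto intro: tail_antimono)
    qed
  qed simp
next
  case (Suc i)
  show ?case using Suc.prems(3) unfolding basis_tail_def[of s n e m]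
  proof (rule bracket_span_right)
    fix a assume "a \<in> e ` {m..n}"
    then obtain k where k: "m \<le> k" "k \<le> n" "a = e k" by auto
    have "br (e i) a \<in> tail (i + k - 1)" using Suc k basis_in_tail by simp
    then have "br (e 1) (br (e i) a) \<in> tail (i + k)"
      using bracket_e1_tail[of "i + k - 1"] Suc k by simp
    moreover have "br (e 1) a \<in> tail (Suc k)"
      using bracket_e1_tail[of k a] Suc.prems k by (simp add: basis_in_tail)
    then have "br (e i) (br (e 1) a) \<in> tail (i + k)"
      using Suc.IH[of "Suc k" "br (e 1) a"] Suc.prems by simp
    ultimately have "br (e (Suc i)) a \<in> tail (i + k)"
      using bracket_basis_Suc[of i a] Suc by (simp add: tail_diff)
    then show "br (e (Suc i)) a \<in> tail (Suc i + m - 1)"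
      using k tail_antimono[of "i + m" "i + k"] by simp
  qed simp
qed

lemma bracket_en: "br x (e n) = 0"
proof -
  have "br x (e n) \<in> {0}"
  proof (rule bracket_span_left[OF _ subspace_single_0])
    show "x \<in> span (e ` {1..n})" unfolding basis_spans ..
  next
    fix a assume "a \<in> e ` {1..n}"
    then obtain i where i: "1 \<le> i" "i \<le> n" "a = e i" by auto
    show "br a (e n) \<in> {0}"
    proof (cases "i = 1")
      case False
      then have "br a (e n) \<in> tail (i + n - 1)"
        using i n_ge_3 bracket_basis_tail[of i n "e n"] by (simp add: basis_in_tail)
      then show ?thesis using i False tail_eq_zero_above[of "i + n - 1"] by simp
    qed (use i bracket_e1_en in simp)
  qed
  then show ?thesis by simp
qed

definition graded_below :: "nat \<Rightarrow> bool" where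
  "graded_below S \<longleftrightarrow> (\<forall>i j. 1 \<le> i \<longrightarrow> i \<le> n \<longrightarrow> 1 \<le> j \<longrightarrow> j \<le> n \<longrightarrow> i + j < S \<longrightarrow>
     br (e i) (e j) \<in> tail (i + j))"

lemma graded_belowD:
  "graded_below S \<Longrightarrow> 1 \<le> i \<Longrightarrow> i \<le> n \<Longrightarrow> 1 \<le> j \<Longrightarrow> j \<le> n \<Longrightarrow> i + j < S \<Longrightarrow>
    br (e i) (e j) \<in> tail (i + j)"
  unfolding graded_below_def by blast

lemma graded_below_chain:
  assumes IH: "graded_below S" and a: "2 \<le> a" "a + 3 \<le> S" and S: "S \<le> n + 1"
  shows "br (e (a + 1)) (e (S - 1 - a)) + br (e a) (e (S - a)) \<in> tail S"
proof -
  define b where "b = S - 1 - a"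
  have b: "2 \<le> b" "b \<le> n - 1" "b + 1 = S - a" "Suc (a + b) = S" "a \<le> n - 1"
    using a S unfolding b_def by linarith+
  have "br (e a) (e b) \<in> tail (a + b)" using graded_belowD[OF IH, of a b] a b by simp
  then have "br (e 1) (br (e a) (e b)) \<in> tail S" using bracket_e1_tail[of "a + b"] a b by simp
  then show ?thesis
    using bracket_basis_leibniz[of a b] a b unfolding b_def[symmetric] b(3)[symmetric] by simp
qed

lemma graded_below_even_sum:
  assumes IH: "graded_below S" and S: "S \<le> n + 1" "S = 2 * m"
    and ij: "2 \<le> i" "2 \<le> j" "i + j = S" "i \<le> j"
  shows "br (e i) (e j) \<in> tail S"
proof -
  have "k + 2 \<le> m \<Longrightarrow> br (e (m - k)) (e (m + k)) \<in> tail S" for k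
  proof (induction k)
    case (Suc k)
    define a where "a = m - Suc k"
    have a: "2 \<le> a" "a + 3 \<le> S" "a + 1 = m - k" "S - 1 - a = m + k" "S - a = m + Suc k"
      using Suc.prems S unfolding a_def by linarith+
    have "br (e (a + 1)) (e (S - 1 - a)) \<in> tail S" using Suc a by simp
    then have "br (e a) (e (S - a)) \<in> tail S"
      using tail_add_iff[OF graded_below_chain[OF IH a(1,2) S(1)]] by simp
    then show ?case using a unfolding a_def by simp
  qed simp
  moreover have "m - i + 2 \<le> m" "m - (m - i) = i" "m + (m - i) = j" using ij S by linarith+
  ultimately show ?thesis by metis
qed

lemma odd_sum_brackets_alternate:
  assumes IH: "graded_below S" and S: "S \<le> n"
    and t: "br (e 2) (e (S - 2)) - s t (e (S - 1)) \<in> tail S"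
    and a: "2 \<le> a" "a \<le> S - 2"
  shows "br (e a) (e (S - a)) - s ((- 1) ^ a * t) (e (S - 1)) \<in> tail S"
  using a
proof (induction a rule: nat_induct_at_least)
  case base then show ?case using t by simp
next
  case (Suc a)
  have "br (e (a + 1)) (e (S - 1 - a)) + br (e a) (e (S - a)) \<in> tail S"
    using graded_below_chain[OF IH Suc.hyps] Suc.prems S by simp
  from tail_diff[OF this Suc.IH] Suc.prems show ?case
    by (simp add: algebra_simps)
qed

lemma odd_sum_bracket_e2_top:
  assumes S: "S = 2 * m + 1" "7 \<le> S" "S \<le> n"
    and alt: "\<And>a. 2 \<le> a \<Longrightarrow> a \<le> S - 2 \<Longrightarrow>
      br (e a) (e (S - a)) - s ((- 1) ^ a * t) (e (S - 1)) \<in> tail S"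
  shows "br (e 2) (e (S - 1)) - s (of_nat (m - 1) * t) (e S) \<in> tail (Suc S)"
proof -
  have e1_top: "br (e 1) (e (S - 1)) = e S" using bracket_e1_basis[of "S - 1"] S by simp
  have chain: "k \<le> m - 1 \<Longrightarrow>
    br (e (m + 1 - k)) (e (m + 1 + k)) - s ((- 1) ^ (m + 1 - k) * (of_nat k * t)) (e S) \<in> tail (Suc S)"
    for k
  proof (induction k)
    case (Suc k)
    define a where "a = m - k"
    define b where "b = m + 1 + k"
    have ab: "2 \<le> a" "a \<le> n - 1" "2 \<le> b" "b \<le> n - 1" "S - a = b" "a \<le> S - 2"
      "m + 1 - k = Suc a" "m + 1 - Suc k = a" "m + 1 + Suc k = b + 1"
      using Suc.prems S unfolding a_def b_def by linarith+
    have "br (e a) (e b) - s ((- 1) ^ a * t) (e (S - 1)) \<in> tail S"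
      using alt[OF ab(1,6)] ab(5) by simp
    then have "br (e 1) (br (e a) (e b) - s ((- 1) ^ a * t) (e (S - 1))) \<in> tail (Suc S)"
      using S by (intro bracket_e1_tail) simp_all
    then have "br (e 1) (br (e a) (e b)) - s ((- 1) ^ a * t) (e S) \<in> tail (Suc S)"
      unfolding bracket_diff_right bracket_scale_right e1_top .
    from tail_diff[OF this Suc.IH] Suc.prems
    show ?case
      unfolding ab(7-9) bracket_basis_leibniz[OF ab(1-4), symmetric] b_def[symmetric]
      by (simp add: algebra_simps scale_left_diff_distrib)
  qed simp
  have "m + 1 - (m - 1) = 2" "m + 1 + (m - 1) = S - 1" using S by linarith+
  with chain[of "m - 1"] show ?thesis by simp
qed

lemma odd_sum_jacobi_e2_e3:
  assumes IH: "graded_below S" and S: "7 \<le> S" "S \<le> n"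
    and c13: "br (e 3) (e (S - 3)) + s t (e (S - 1)) \<in> tail S"
    and c2: "br (e 2) (e (S - 1)) - s c (e S) \<in> tail (Suc S)"
  shows "s (t * c) (e S) \<in> tail (Suc S)"
proof -
  have "S - 3 + 2 = S - 1" using S by simp
  then have "br (e (S - 3)) (e 2) \<in> tail (S - 1)"
    using graded_belowD[OF IH, of "S - 3" 2] S by (simp del: add_2_eq_Suc')
  then have T2: "br (e 3) (br (e (S - 3)) (e 2)) \<in> tail (Suc S)"
    using bracket_basis_tail[of 3 "S - 1"] S by simp
  have T3: "br (e (S - 3)) (br (e 2) (e 3)) \<in> tail (Suc S)"
    using bracket_basis_tail[of "S - 3" 5] bracket_e2_e3 S by simp
  have T1: "br (e 2) (br (e 3) (e (S - 3)) + s t (e (S - 1))) \<in> tail (Suc S)"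
    using bracket_basis_tail[of 2 S] c13 S by simp
  have "s (t * c) (e S) =
      br (e 2) (br (e 3) (e (S - 3)) + s t (e (S - 1))) - s t (br (e 2) (e (S - 1)) - s c (e S))
      + br (e 3) (br (e (S - 3)) (e 2)) + br (e (S - 3)) (br (e 2) (e 3))"
    using jacobi[of "e 2" "e 3" "e (S - 3)"]
    by (simp add: bracket_add_right bracket_scale_right algebra_simps)
  also have "\<dots> \<in> tail (Suc S)"
    using tail_add[OF tail_add[OF tail_diff[OF T1 tail_scale[OF c2]] T2] T3] .
  finally show ?thesis .
qed

lemma graded_below_odd_sum:
  assumes IH: "graded_below S" and S: "7 \<le> S" "S \<le> n" "S = 2 * m + 1"
    and ij: "2 \<le> i" "2 \<le> j" "i + j = S"
  shows "br (e i) (e j) \<in> tail S"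
proof -
  have "br (e 2) (e (S - 2)) \<in> tail (S - 1)"
    using bracket_basis_tail[of 2 "S - 2" "e (S - 2)"] S by (simp add: basis_in_tail)
  then obtain t where "br (e 2) (e (S - 2)) - s t (e (S - 1)) \<in> tail S"
    using tail_decompose[of "S - 1"] S by auto
  note alt = odd_sum_brackets_alternate[OF IH S(2) this]
  have "s (t * (of_nat (m - 1) * t)) (e S) \<in> tail (Suc S)"
    using alt[of 3] S
    by (intro odd_sum_jacobi_e2_e3[OF IH S(1,2)] odd_sum_bracket_e2_top[OF S(3,1,2) alt]) simp_all
  \<comment> \<open>\<open>(m - 1) t\<^sup>2 = 0\<close> forces \<open>t = 0\<close>: this is where characteristic zero is used.\<close>
  then have "t * (of_nat (m - 1) * t) = 0"
    using S by (intro scale_basis_in_tail_SucD) simp_all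
  moreover have "(of_nat (m - 1) :: 'k) \<noteq> 0" using S by simp
  ultimately have "t = 0" by simp
  moreover have "i \<le> S - 2" "S - i = j" using ij by simp_all
  ultimately show ?thesis using alt[of i] ij by simp
qed

lemma graded_below_sum:
  assumes IH: "graded_below S" and S: "S \<le> n + 1" "odd S \<Longrightarrow> S \<le> n"
    and ij: "1 \<le> i" "i \<le> j" "j \<le> n" "i + j = S"
  shows "br (e i) (e j) \<in> tail S"
proof -
  consider "i = 1" | "2 \<le> i" "even S" | m where "2 \<le> i" "S = 2 * m + 1"
    using ij by (cases "i = 1"; cases "even S") (auto elim: oddE)
  then show ?thesis
  proof cases
    case 1
    then show ?thesis using ij bracket_e1_tail[of j "e j"] by (simp add: basis_in_tail)
  next
    case 2
    then show ?thesis using graded_below_even_sum[OF IH S(1)] ij by (auto elim: evenE)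
  next
    case (3 m)
    show ?thesis
    proof (cases "S = 5")
      case True
      then have "i = 2" "j = 3" using 3 ij by linarith+
      then show ?thesis using bracket_e2_e3 True by simp
    next
      case False
      then have "7 \<le> S" using 3 ij by presburger
      then show ?thesis using graded_below_odd_sum[OF IH _ _ 3(2)] S 3 ij by simp
    qed
  qed
qed

lemma graded_below_Suc:
  assumes IH: "graded_below S" and S: "S \<le> n + 1" "odd S \<Longrightarrow> S \<le> n"
  shows "graded_below (Suc S)"
  unfolding graded_below_def
proof (intro allI impI)
  fix i j assume ij: "1 \<le> i" "i \<le> n" "1 \<le> j" "j \<le> n" "i + j < Suc S"
  show "br (e i) (e j) \<in> tail (i + j)"
  proof (cases "i + j < S")
    case True then show ?thesis using graded_belowD[OF IH] ij by simp
  next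
    case False
    then have ij_S: "i + j = S" using ij by simp
    show ?thesis
    proof (cases "i \<le> j")
      case True then show ?thesis using graded_below_sum[OF IH S] ij ij_S by simp
    next
      case False
      then have "br (e j) (e i) \<in> tail (i + j)"
        using graded_below_sum[OF IH S, of j i] ij ij_S by simp
      then show ?thesis by (simp add: bracket_antisym[of "e i"] minus_in_tail_iff)
    qed
  qed
qed

lemma graded_below_all:
  assumes "odd n" "S \<le> n + 2"
  shows "graded_below S"
  using assms(2)
proof (induction S)
  case 0 then show ?case by (simp add: graded_below_def)
next
  case (Suc S)
  moreover have "odd S \<Longrightarrow> S \<le> n" using Suc.prems assms(1) by presburger
  ultimately show ?case by (intro graded_below_Suc) simp_all
qed

lemma bracket_basis_graded:
  assumes "odd n" "1 \<le> i" "i \<le> n" "1 \<le> j" "j \<le> n"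
  shows "br (e i) (e j) \<in> tail (i + j)"
proof (cases "i + j \<le> n + 1")
  case True
  then show ?thesis using graded_belowD[OF graded_below_all[OF assms(1) order.refl]] assms by simp
next
  case False
  then have "br (e i) (e j) \<in> tail (i + j - 1)"
    using assms by (intro bracket_basis_tail) (simp_all add: basis_in_tail)
  then show ?thesis using False tail_eq_zero_above[of "i + j - 1"] by simp
qed

lemma bracket_tail_tail:
  assumes "odd n" "1 \<le> a" "1 \<le> b" "x \<in> tail a" "y \<in> tail b"
  shows "br x y \<in> tail (a + b)"
  using assms(4) unfolding basis_tail_def[of s n e a]
proof (rule bracket_span_left)
  fix p assume "p \<in> e ` {a..n}"
  then obtain i where i: "a \<le> i" "i \<le> n" "p = e i" by auto
  show "br p y \<in> tail (a + b)"
    using assms(5) unfolding basis_tail_def[of s n e b]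
  proof (rule bracket_span_right)
    fix q assume "q \<in> e ` {b..n}"
    then obtain j where j: "b \<le> j" "j \<le> n" "q = e j" by auto
    show "br p q \<in> tail (a + b)"
      using bracket_basis_graded[OF assms(1), of i j] i j assms(2,3)
      by (auto intro: tail_antimono[of "a + b" "i + j"])
  qed simp
qed simp

definition top_coordinate :: "'g \<Rightarrow> 'k" where
  "top_coordinate v = representation (e ` {1..n}) v (e n)"

lemma linear_top_coordinate: "Vector_Spaces.linear s (*) top_coordinate"
  unfolding top_coordinate_def[abs_def]
  using linear_representation[OF basis_independent basis_spans] .

lemma top_coordinate_en: "top_coordinate (e n) = 1"
  using representation_basis[OF basis_independent, of "e n"] n_ge_3
  by (simp add: top_coordinate_def)

lemma en_in_stabilizer: "Vector_Spaces.linear s (*) l \<Longrightarrow> e n \<in> stabilizer br l"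
  by (simp add: stabilizer_def bracket_en linear_functional_zero)

lemma dim_stabilizer_ge_1: "Vector_Spaces.linear s (*) l \<Longrightarrow> 1 \<le> dim (stabilizer br l)"
  using dim_subset[of "{e n}" "stabilizer br l"] en_in_stabilizer basis_nonzero[of n] n_ge_3
  by simp

lemma chi_attained: "\<exists>l. Vector_Spaces.linear s (*) l \<and> dim (stabilizer br l) = chi s br"
  unfolding chi_def by (rule LeastI[of _ "dim (stabilizer br top_coordinate)"])
    (use linear_top_coordinate in blast)

lemma dim_stabilizer_ge_2:
  assumes i: "1 \<le> i" "i \<le> n - 1"
    and zero: "bracket_space s br (tail i) (tail (n - i)) = {0}"
    and l: "Vector_Spaces.linear s (*) l"
  shows "2 \<le> dim (stabilizer br l)"
proof -
  define K where "K = {u \<in> tail (n - i). \<forall>a<i - 1. (l \<circ> br (e (Suc a))) u = 0}"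
  have "dim (tail (n - i)) \<le> dim K + (i - 1)"
    unfolding K_def
    by (rule dim_le_dim_common_kernel_add[OF subspace_tail])
      (rule Vector_Spaces.linear_compose[OF linear_bracket_right l])
  moreover have "dim (tail (n - i)) = i + 1" using i by (simp add: dim_tail)
  ultimately have "2 \<le> dim K" using i by simp
  moreover have "K \<subseteq> stabilizer br l"
  proof
    fix u assume u: "u \<in> K"
    have "br x u \<in> {w. l w = 0}" for x
    proof (rule bracket_span_left[OF _ subspace_linear_functional_kernel[OF l]])
      show "x \<in> span (e ` {1..n})" unfolding basis_spans ..
    next
      fix a assume "a \<in> e ` {1..n}"
      then obtain q where q: "1 \<le> q" "q \<le> n" "a = e q" by auto
      show "br a u \<in> {w. l w = 0}"
      proof (cases "q < i")
        case True
        then show ?thesis using u q unfolding K_def by (auto dest: spec[of _ "q - 1"])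
      next
        case False
        then have "a \<in> tail i" "u \<in> tail (n - i)" using u q by (simp_all add: K_def basis_in_tail)
        then have "br a u \<in> bracket_space s br (tail i) (tail (n - i))"
          unfolding bracket_space_def by (blast intro: span_base)
        then show ?thesis using zero linear_functional_zero[OF l] by simp
      qed
    qed
    then show "u \<in> stabilizer br l" by (simp add: stabilizer_def)
  qed
  then have "dim K \<le> dim (stabilizer br l)" by (rule dim_subset)
  ultimately show ?thesis by simp
qed

lemma chi_ge_2:
  assumes "1 \<le> i" "i \<le> n - 1" "bracket_space s br (tail i) (tail (n - i)) = {0}"
  shows "2 \<le> chi s br"
  using chi_attained dim_stabilizer_ge_2[OF assms] by metis

lemma tail_n_scale: "x \<in> tail n \<Longrightarrow> \<exists>c. x = s c (e n)"
  by (auto simp: basis_tail_def span_singleton)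

lemma bracket_space_tails_eq_zero:
  assumes "odd n" and i: "1 \<le> i" "i \<le> n - 1" and z: "br (e i) (e (n - i)) = 0"
  shows "bracket_space s br (tail i) (tail (n - i)) = {0}"
proof -
  have "br a b = 0" if a: "a \<in> tail i" and b: "b \<in> tail (n - i)" for a b
  proof -
    have "i \<le> n" using i by simp
    then obtain c where c: "a - s c (e i) \<in> tail (Suc i)" using tail_decompose[OF _ a] by blast
    obtain d where d: "b - s d (e (n - i)) \<in> tail (Suc (n - i))"
      using tail_decompose[OF _ b] by force
    have "br (a - s c (e i)) b \<in> tail (n + 1)"
      using bracket_tail_tail[OF assms(1) _ _ c b] i by simp
    moreover have "br (e i) (b - s d (e (n - i))) \<in> tail (n + 1)"
      using bracket_tail_tail[OF assms(1) _ _ _ d, of i "e i"] i by (simp add: basis_in_tail)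
    ultimately have "br (a - s c (e i)) b = 0" "br (e i) (b - s d (e (n - i))) = 0"
      using tail_eq_zero_above[of "n + 1"] by simp_all
    then show ?thesis
      using z by (simp add: bracket_diff_left bracket_diff_right bracket_scale_left bracket_scale_right)
  qed
  then have "{br a b |a b. a \<in> tail i \<and> b \<in> tail (n - i)} \<subseteq> {0}" by blast
  then have "bracket_space s br (tail i) (tail (n - i)) \<subseteq> span {0}"
    unfolding bracket_space_def by (rule span_mono)
  moreover have "0 \<in> bracket_space s br (tail i) (tail (n - i))"
    unfolding bracket_space_def by (rule span_zero)
  ultimately show ?thesis by auto
qed

lemma stabilizer_top_coordinate_subset:
  assumes "odd n" and H: "\<forall>i\<in>{1..n-1}. bracket_space s br (tail i) (tail (n - i)) \<noteq> {0}"
  shows "stabilizer br top_coordinate \<subseteq> tail n"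
proof
  fix y assume "y \<in> stabilizer br top_coordinate"
  then have ly: "top_coordinate (br x y) = 0" for x by (simp add: stabilizer_def)
  have "1 \<le> k \<Longrightarrow> k \<le> n \<Longrightarrow> y \<in> tail k" for k
  proof (induction k rule: nat_induct_at_least)
    case base then show ?case by (metis tail_1 UNIV_I)
  next
    case (Suc k)
    obtain c where c: "y - s c (e k) \<in> tail (Suc k)"
      using tail_decompose[of k y] Suc by auto
    define p where "p = n - k"
    have p: "1 \<le> p" "p \<le> n - 1" "k = n - p" using Suc unfolding p_def by linarith+
    have "br (e p) (e k) \<noteq> 0"
      using H bracket_space_tails_eq_zero[OF assms(1) p(1,2)] p by auto
    moreover have "br (e p) (e k) \<in> tail n"
      using bracket_basis_graded[OF assms(1), of p k] p Suc by simp
    then obtain \<mu> where \<mu>: "br (e p) (e k) = s \<mu> (e n)" using tail_n_scale by blast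
    ultimately have "\<mu> \<noteq> 0" by auto
    have "br (e p) (y - s c (e k)) \<in> tail (n + 1)"
      using bracket_tail_tail[OF assms(1) _ _ _ c, of p "e p"] p by (simp add: basis_in_tail)
    then have "br (e p) y = s (c * \<mu>) (e n)"
      using tail_eq_zero_above[of "n + 1"] \<mu>
      by (simp add: bracket_diff_right bracket_scale_right)
    then have "c * \<mu> = 0"
      using ly[of "e p"] linear_top_coordinate top_coordinate_en
      by (simp add: Vector_Spaces.linear_iff)
    then show ?case using c \<open>\<mu> \<noteq> 0\<close> by simp
  qed
  then show "y \<in> tail n" using n_ge_3 by simp
qed

lemma chi_eq_1:
  assumes "odd n" and H: "\<forall>i\<in>{1..n-1}. bracket_space s br (tail i) (tail (n - i)) \<noteq> {0}"
  shows "chi s br = 1"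
  unfolding chi_def
proof (rule Least_equality)
  have "dim (stabilizer br top_coordinate) \<le> dim (tail n)"
    using stabilizer_top_coordinate_subset[OF assms] by (rule dim_subset)
  then have "dim (stabilizer br top_coordinate) = 1"
    using dim_tail[of n] dim_stabilizer_ge_1[OF linear_top_coordinate] n_ge_3 by simp
  then show "\<exists>l. Vector_Spaces.linear s (*) l \<and> dim (stabilizer br l) = 1"
    using linear_top_coordinate by blast
qed (use dim_stabilizer_ge_1 in blast)

end

theorem theorem6p3:
  fixes s :: "'k::field_char_0 \<Rightarrow> 'g::ab_group_add \<Rightarrow> 'g"
    and br :: "'g \<Rightarrow> 'g \<Rightarrow> 'g"
    and n :: nat and e :: "nat \<Rightarrow> 'g"
  assumes "filiform s br n"
    and "odd n" and "n \<ge> 3"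
    and "adapted_basis s br n e"
  shows "chi s br = 1 \<longleftrightarrow>
         (\<forall>i\<in>{1..n-1}. bracket_space s br (basis_tail s n e i) (basis_tail s n e (n - i)) \<noteq> {0})"
proof -
  interpret adapted_filiform s br n e
    using assms by (simp add: adapted_filiform_def)
  show ?thesis
  proof
    assume "chi s br = 1"
    then show "\<forall>i\<in>{1..n-1}. bracket_space s br (tail i) (tail (n - i)) \<noteq> {0}"
      using chi_ge_2 by fastforce
  qed (rule chi_eq_1[OF \<open>odd n\<close>])
qed

end
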